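(* Let $T$ be a rooted binary phylogenetic $X$-tree with strictly positive edge lengths $\lambda_T(e)$ such that the ranking $\pi_T$ is strict and reversible with respect to some $X'\subset X$. Let $k,d>0$. If all edge lengths are multiplied by $k$ and then $d$ is added to the length of every pendant edge, the resulting edge lengths again give a strict ranking that is reversible with respect to $X'$.
   Context: A rooted binary phylogenetic $X$-tree ($X$ finite) is a rooted tree whose root $\rho$ has in-degree 0 and out-degree 2, all edges directed away from $\rho$, all other interior vertices have in-degree 1 and out-degree 2, and whose leaves are bijectively labelled by $X$. Edges incident to leaves are pendant edges. Every edge $e$ has a strictly positive length $\lambda_e$. The Fair Proportion index of $x\in X$ is $FP_T(x)=\sum_{e\in P(T;\rho,x)}\lambda_e/D_e$, where $P(T;\rho,x)$ is the path from $\rho$ to $x$ and $D_e$ is the number of leaves descended from $e$. For $Y\subseteq X$, the induced subtree $T_Y$ is obtained from the minimal subtree of $T$ connecting $Y$ by suppressing all non-root vertices of in- and out-degree 1, adding the lengths of merged edges; if the root then has out-degree 1, it and its incident edge are deleted. The ranking $\pi_T$ is strict if all values $FP_T(x)$ are pairwise distinct. For $X'\subset X$, $\widetilde X=X\setminus X'$ and $\widetilde T=T_{\widetilde X}$, a strict ranking $\pi_T$ is reversible with respect to $X'$ if for all distinct $x_i,x_j\in\widetilde X$, $FP_T(x_i)>FP_T(x_j)$ implies $FP_{\widetilde T}(x_i)<FP_{\widetilde T}(x_j)$. *)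

theory Defs
  imports Main "HOL.Real"
begin

text \<open>Every vertex carries the
  length of its incoming edge (the real number). The value stored at the root
  has no meaning (the root has no incoming edge) and is ignored everywhere.\<close>
datatype 'a etree = Leaf real 'a | Node real "'a etree" "'a etree"

fun inlen :: "'a etree \<Rightarrow> real" where
  "inlen (Leaf l _) = l"
| "inlen (Node l _ _) = l"

fun leaf_list :: "'a etree \<Rightarrow> 'a list" where
  "leaf_list (Leaf _ x) = [x]"
| "leaf_list (Node _ a b) = leaf_list a @ leaf_list b"

fun pos_below :: "'a etree \<Rightarrow> bool" where
  "pos_below (Leaf _ _) = True"
| "pos_below (Node _ a b) = (inlen a > 0 \<and> inlen b > 0 \<and> pos_below a \<and> pos_below b)"

definition phylo_tree :: "'a set \<Rightarrow> 'a etree \<Rightarrow> bool" where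
  "phylo_tree X t \<longleftrightarrow> (\<exists>l a b. t = Node l a b) \<and> distinct (leaf_list t)
     \<and> set (leaf_list t) = X \<and> pos_below t"

fun path_sum :: "'a etree \<Rightarrow> 'a \<Rightarrow> real" where
  "path_sum (Leaf l y) x = (if y = x then l else 0)"
| "path_sum (Node l a b) x =
     (if x \<in> set (leaf_list (Node l a b)) then l / real (length (leaf_list (Node l a b))) else 0)
     + path_sum a x + path_sum b x"

fun FP :: "'a etree \<Rightarrow> 'a \<Rightarrow> real" where
  "FP (Leaf _ _) x = 0"
| "FP (Node _ a b) x = path_sum a x + path_sum b x"

fun add_len :: "real \<Rightarrow> 'a etree \<Rightarrow> 'a etree" where
  "add_len c (Leaf l x) = Leaf (l + c) x"
| "add_len c (Node l a b) = Node (l + c) a b"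

text \<open>Restriction to Y: minimal connecting subtree, suppressing degree-1 vertices
  (merging edge lengths); if the root gets out-degree 1 the surviving child becomes
  the root (its incoming length then being ignored, i.e. the root edge is deleted).\<close>
fun restr :: "'a set \<Rightarrow> 'a etree \<Rightarrow> 'a etree option" where
  "restr Y (Leaf l x) = (if x \<in> Y then Some (Leaf l x) else None)"
| "restr Y (Node l a b) =
     (case (restr Y a, restr Y b) of
        (Some a', Some b') \<Rightarrow> Some (Node l a' b')
      | (Some a', None) \<Rightarrow> Some (add_len l a')
      | (None, Some b') \<Rightarrow> Some (add_len l b')
      | (None, None) \<Rightarrow> None)"

definition induced :: "'a etree \<Rightarrow> 'a set \<Rightarrow> 'a etree" where
  "induced t Y = the (restr Y t)"

definition strict_ranking :: "'a set \<Rightarrow> 'a etree \<Rightarrow> bool" where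
  "strict_ranking X t \<longleftrightarrow> inj_on (FP t) X"

definition reversible :: "'a set \<Rightarrow> 'a set \<Rightarrow> 'a etree \<Rightarrow> bool" where
  "reversible X X' t \<longleftrightarrow> strict_ranking X t \<and>
     (\<forall>xi \<in> X - X'. \<forall>xj \<in> X - X'. xi \<noteq> xj \<longrightarrow>
        FP t xi > FP t xj \<longrightarrow> FP (induced t (X - X')) xi < FP (induced t (X - X')) xj)"

fun rescale :: "real \<Rightarrow> real \<Rightarrow> 'a etree \<Rightarrow> 'a etree" where
  "rescale k d (Leaf l x) = Leaf (k * l + d) x"
| "rescale k d (Node l a b) = Node (k * l) (rescale k d a) (rescale k d b)"

end

theory Submission
  imports Defs
begin

text \<open>On a tree with distinct leaf labels, rescaling sends every Fair Proportion value
  FP(x) to k FP(x) + d when the tree has at least two leaves (each leaf lies on exactly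
  one pendant edge, which gains d) and leaves it 0 on a one-leaf tree. Either way this is
  one increasing affine map for all leaves when k > 0, so the rescaled ranking, and its
  comparison with the ranking of the induced subtree, coincide with the original ones;
  the latter because restricting to a leaf set commutes with rescaling.\<close>

lemma count_list_distinct: "distinct xs \<Longrightarrow> x \<in> set xs \<Longrightarrow> count_list xs x = 1"
  by (induction xs) auto

lemma leaf_list_rescale [simp]: "leaf_list (rescale k d t) = leaf_list t"
  by (induction t) auto

lemma leaf_list_add_len [simp]: "leaf_list (add_len l t) = leaf_list t"
  by (cases t) auto

lemma path_sum_rescale:
  "path_sum (rescale k d t) x = k * path_sum t x + d * count_list (leaf_list t) x"
  by (induction t) (auto simp: algebra_simps)

lemma FP_rescale:
  assumes "distinct (leaf_list t)" and "x \<in> set (leaf_list t)"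
  shows "FP (rescale k d t) x = k * FP t x + (case t of Leaf _ _ \<Rightarrow> 0 | Node _ _ _ \<Rightarrow> d)"
proof (cases t)
  case (Node l a b)
  have "count_list (leaf_list a) x + count_list (leaf_list b) x = 1"
    using count_list_distinct[OF assms] Node by simp
  then have "d * count_list (leaf_list a) x + d * count_list (leaf_list b) x = d"
    by (metis distrib_left mult.right_neutral of_nat_1 of_nat_add)
  then show ?thesis
    using Node by (simp add: path_sum_rescale algebra_simps)
qed simp

lemma FP_rescale_less_iff:
  assumes "distinct (leaf_list t)" and "x \<in> set (leaf_list t)" and "y \<in> set (leaf_list t)"
    and "k > 0"
  shows "FP (rescale k d t) x < FP (rescale k d t) y \<longleftrightarrow> FP t x < FP t y"
  using assms by (simp add: FP_rescale)

lemma strict_ranking_rescale_iff: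
  assumes "distinct (leaf_list t)" and "set (leaf_list t) = X" and "k > 0"
  shows "strict_ranking X (rescale k d t) \<longleftrightarrow> strict_ranking X t"
  using assms by (auto simp: strict_ranking_def inj_on_def FP_rescale)

lemma restr_eq_None_iff: "restr Y t = None \<longleftrightarrow> Y \<inter> set (leaf_list t) = {}"
  by (induction t) (auto split: option.splits)

lemma leaf_list_restr:
  "restr Y t = Some t' \<Longrightarrow> leaf_list t' = filter (\<lambda>x. x \<in> Y) (leaf_list t)"
  by (induction t arbitrary: t') (auto split: option.splits simp: restr_eq_None_iff filter_empty_conv)

lemma add_len_rescale: "add_len (k * l) (rescale k d t) = rescale k d (add_len l t)"
  by (cases t) (auto simp: algebra_simps)

lemma restr_rescale: "restr Y (rescale k d t) = map_option (rescale k d) (restr Y t)"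
  by (induction t) (auto split: option.splits simp: add_len_rescale)

lemma leaf_list_induced:
  "Y \<inter> set (leaf_list t) \<noteq> {} \<Longrightarrow> leaf_list (induced t Y) = filter (\<lambda>x. x \<in> Y) (leaf_list t)"
  by (metis induced_def leaf_list_restr option.collapse restr_eq_None_iff)

lemma induced_rescale:
  "Y \<inter> set (leaf_list t) \<noteq> {} \<Longrightarrow> induced (rescale k d t) Y = rescale k d (induced t Y)"
  by (metis induced_def option.collapse option.map_sel restr_eq_None_iff restr_rescale)

lemma reversible_rescale_iff:
  assumes "distinct (leaf_list t)" and "set (leaf_list t) = X" and "k > 0"
  shows "reversible X X' (rescale k d t) \<longleftrightarrow> reversible X X' t"
proof -
  let ?Y = "X - X'"
  have "FP (rescale k d t) xi > FP (rescale k d t) xj \<longleftrightarrow> FP t xi > FP t xj"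
    and "FP (induced (rescale k d t) ?Y) xi < FP (induced (rescale k d t) ?Y) xj
         \<longleftrightarrow> FP (induced t ?Y) xi < FP (induced t ?Y) xj"
    if "xi \<in> ?Y" "xj \<in> ?Y" for xi xj
  proof -
    have meets: "?Y \<inter> set (leaf_list t) \<noteq> {}"
      using that assms(2) by blast
    have leaves: "leaf_list (induced t ?Y) = filter (\<lambda>x. x \<in> ?Y) (leaf_list t)"
      using leaf_list_induced[OF meets] .
    show "FP (rescale k d t) xi > FP (rescale k d t) xj \<longleftrightarrow> FP t xi > FP t xj"
      using that assms by (intro FP_rescale_less_iff) auto
    show "FP (induced (rescale k d t) ?Y) xi < FP (induced (rescale k d t) ?Y) xj
         \<longleftrightarrow> FP (induced t ?Y) xi < FP (induced t ?Y) xj"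
      unfolding induced_rescale[OF meets]
      using that assms by (intro FP_rescale_less_iff) (auto simp: leaves)
  qed
  then show ?thesis
    using strict_ranking_rescale_iff[OF assms] by (simp add: reversible_def)
qed

theorem corollary2:
  fixes X X' :: "'a set" and T :: "'a etree" and k d :: real
  assumes "phylo_tree X T" and "X' \<subset> X"
    and "reversible X X' T"
    and "k > 0" and "d > 0"
  shows "strict_ranking X (rescale k d T) \<and> reversible X X' (rescale k d T)"
proof -
  have leaves: "distinct (leaf_list T)" "set (leaf_list T) = X"
    using assms(1) by (auto simp: phylo_tree_def)
  have "reversible X X' (rescale k d T)"
    using reversible_rescale_iff[OF leaves assms(4)] assms(3) by simp
  then show ?thesis
    by (simp add: reversible_def)
qed

end
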